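(* Let $\mathfrak g$ be a finite-dimensional real Lie algebra having an ideal of codimension one isomorphic to the Heisenberg Lie algebra $\mathfrak H_{2m+1}$ (for some $m\ge1$). Then: (a) if $\mathfrak g$ is not unimodular, then no inner product on $\mathfrak g$ has a geodesic basis; (b) if $\mathfrak g$ is unimodular, then every inner product on $\mathfrak g$ has an orthonormal geodesic basis.
   Context: For an inner product $\langle\cdot,\cdot\rangle$ on a real Lie algebra $\mathfrak g$, a nonzero $X\in\mathfrak g$ is a geodesic element if $\langle X,[X,Y]\rangle=0$ for all $Y\in\mathfrak g$; a geodesic basis is a basis consisting of geodesic elements. A Lie algebra is unimodular if $\operatorname{Tr}(\operatorname{ad}(X))=0$ for all $X$. The Heisenberg Lie algebra $\mathfrak H_{2m+1}$ has basis $\{X_1,\dots,X_{2m+1}\}$ with nonzero brackets $[X_i,X_{i+m}]=X_{2m+1}$ for $i=1,\dots,m$ (and all other brackets of basis elements zero, up to antisymmetry). *)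

theory Defs
  imports "HOL-Analysis.Analysis"
begin

text \<open>The Euclidean inner product of the type is only used to define the trace;
the inner products of the statement are arbitrary.\<close>

definition lie_algebra :: "('a::euclidean_space \<Rightarrow> 'a \<Rightarrow> 'a) \<Rightarrow> bool" where
  "lie_algebra br \<longleftrightarrow> bilinear br \<and> (\<forall>x. br x x = 0) \<and>
     (\<forall>x y z. br x (br y z) + br y (br z x) + br z (br x y) = 0)"

definition trace_map :: "('a::euclidean_space \<Rightarrow> 'a) \<Rightarrow> real" where
  "trace_map f = (\<Sum>b\<in>Basis. inner (f b) b)"

definition unimodular :: "('a::euclidean_space \<Rightarrow> 'a \<Rightarrow> 'a) \<Rightarrow> bool" where
  "unimodular br \<longleftrightarrow> (\<forall>X. trace_map (br X) = 0)"

definition lie_ideal :: "('a::euclidean_space \<Rightarrow> 'a \<Rightarrow> 'a) \<Rightarrow> 'a set \<Rightarrow> bool" where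
  "lie_ideal br h \<longleftrightarrow> subspace h \<and> (\<forall>x\<in>h. \<forall>y. br y x \<in> h)"

text \<open>h is isomorphic (as a Lie algebra, with the bracket of g restricted) to the
Heisenberg algebra H_{2m+1}: it has a basis X_1,...,X_{2m+1} with
[X_i, X_{i+m}] = X_{2m+1} (i = 1..m) and all other brackets of basis elements zero
(up to antisymmetry).\<close>
definition heisenberg_basis ::
  "('a::euclidean_space \<Rightarrow> 'a \<Rightarrow> 'a) \<Rightarrow> nat \<Rightarrow> 'a set \<Rightarrow> (nat \<Rightarrow> 'a) \<Rightarrow> bool" where
  "heisenberg_basis br m h X \<longleftrightarrow>
     inj_on X {1..2*m+1} \<and> independent (X ` {1..2*m+1}) \<and> span (X ` {1..2*m+1}) = h \<and>
     (\<forall>i\<in>{1..2*m+1}. \<forall>j\<in>{1..2*m+1}.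
        br (X i) (X j) =
          (if i \<le> m \<and> j = i + m then X (2*m+1)
           else if j \<le> m \<and> i = j + m then - X (2*m+1)
           else 0))"

definition isomorphic_to_heisenberg ::
  "('a::euclidean_space \<Rightarrow> 'a \<Rightarrow> 'a) \<Rightarrow> nat \<Rightarrow> 'a set \<Rightarrow> bool" where
  "isomorphic_to_heisenberg br m h \<longleftrightarrow> (\<exists>X. heisenberg_basis br m h X)"

definition inner_product :: "('a::real_vector \<Rightarrow> 'a \<Rightarrow> real) \<Rightarrow> bool" where
  "inner_product B \<longleftrightarrow> bilinear B \<and> (\<forall>x y. B x y = B y x) \<and> (\<forall>x. x \<noteq> 0 \<longrightarrow> B x x > 0)"

definition geodesic_element ::
  "('a::real_vector \<Rightarrow> 'a \<Rightarrow> real) \<Rightarrow> ('a \<Rightarrow> 'a \<Rightarrow> 'a) \<Rightarrow> 'a \<Rightarrow> bool" where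
  "geodesic_element B br X \<longleftrightarrow> X \<noteq> 0 \<and> (\<forall>Y. B X (br X Y) = 0)"

definition geodesic_basis ::
  "('a::real_vector \<Rightarrow> 'a \<Rightarrow> real) \<Rightarrow> ('a \<Rightarrow> 'a \<Rightarrow> 'a) \<Rightarrow> 'a set \<Rightarrow> bool" where
  "geodesic_basis B br S \<longleftrightarrow> independent S \<and> span S = UNIV \<and> (\<forall>X\<in>S. geodesic_element B br X)"

definition orthonormal_wrt :: "('a \<Rightarrow> 'a \<Rightarrow> real) \<Rightarrow> 'a set \<Rightarrow> bool" where
  "orthonormal_wrt B S \<longleftrightarrow> (\<forall>x\<in>S. \<forall>y\<in>S. B x y = (if x = y then 1 else 0))"

end

theory Submission
  imports Defs
begin

text \<open>Write \<open>\<gg> = h \<oplus> \<real>e\<close> and let \<open>z = X\<^sub>2\<^sub>m\<^sub>+\<^sub>1\<close>, which spans the centre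
  \<open>[h, h]\<close> of \<open>h\<close>. As \<open>h\<close> is an ideal, \<open>[e, z] = \<lambda> z\<close>, and the Jacobi identity for
  \<open>e, X\<^sub>i, X\<^sub>i\<^sub>+\<^sub>m\<close> shows that the two corresponding diagonal entries of \<open>ad e\<close> add up
  to \<open>\<lambda>\<close>. Hence \<open>tr ad e = (m + 1) \<lambda>\<close>, while \<open>ad u\<close> is traceless for \<open>u \<in> h\<close>, so \<open>\<gg>\<close>
  is unimodular iff \<open>\<lambda> = 0\<close>.

  If \<open>\<lambda> \<noteq> 0\<close>, every geodesic element \<open>x = u + t e\<close> is orthogonal to \<open>z\<close>: for \<open>t \<noteq> 0\<close>
  because \<open>[x, z] = t \<lambda> z\<close>, for \<open>u \<notin> \<real>z\<close> because \<open>z \<in> [u, \<gg>]\<close>, and a nonzero multiple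
  of \<open>z\<close> is not geodesic at all. So no basis can consist of geodesic elements.

  If \<open>\<lambda> = 0\<close>, then \<open>z\<close> is central and \<open>[\<gg>, \<gg>] \<subseteq> h\<close>, so the unit vector along \<open>z\<close>
  and the unit normal of \<open>h\<close> are geodesic, and \<open>x \<in> h \<inter> z\<^sup>\<perp>\<close> is geodesic iff
  \<open>\<langle>x, [e, x]\<rangle> = 0\<close>. The trace of this quadratic form on \<open>h \<inter> z\<^sup>\<perp>\<close> is \<open>tr ad e = 0\<close>,
  and an orthonormal basis of isotropic vectors of a traceless quadratic form is obtained by
  repeatedly rotating a pair of basis vectors on which the form takes opposite signs.\<close>

section \<open>Traces and inner products\<close>

lemma trace_map_coordinates:
  fixes f :: "'a::euclidean_space \<Rightarrow> 'a" and c :: "'a \<Rightarrow> 'a \<Rightarrow> real"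
  assumes "linear f" "\<And>b. b \<in> S \<Longrightarrow> linear (c b)" "\<And>x. (\<Sum>b\<in>S. c b x *\<^sub>R b) = x"
  shows "trace_map f = (\<Sum>b\<in>S. c b (f b))"
proof -
  have "trace_map f = (\<Sum>\<beta>\<in>Basis. inner (f (\<Sum>b\<in>S. c b \<beta> *\<^sub>R b)) \<beta>)"
    by (simp add: trace_map_def assms(3))
  also have "\<dots> = (\<Sum>b\<in>S. \<Sum>\<beta>\<in>Basis. c b \<beta> * inner (f b) \<beta>)"
    by (simp add: linear_sum[OF assms(1)] linear_scale[OF assms(1)] inner_sum_left sum.swap[of _ Basis])
  also have "\<dots> = (\<Sum>b\<in>S. c b (\<Sum>\<beta>\<in>Basis. inner (f b) \<beta> *\<^sub>R \<beta>))"
    by (rule sum.cong) (simp_all add: linear_sum[OF assms(2)] linear_scale[OF assms(2)] mult.commute)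
  also have "\<dots> = (\<Sum>b\<in>S. c b (f b))"
    by (simp add: euclidean_representation)
  finally show ?thesis .
qed

lemma trace_map_add_scale:
  "trace_map (\<lambda>y. f y + c *\<^sub>R g y) = trace_map f + c * trace_map g"
  unfolding trace_map_def by (simp add: inner_add_left sum.distrib sum_distrib_left)

lemma sum_eq_0_obtains_opposite_signs:
  fixes f :: "'b \<Rightarrow> real"
  assumes "finite A" "sum f A = 0" "\<exists>x\<in>A. f x \<noteq> 0"
  obtains x y where "x \<in> A" "y \<in> A" "0 < f x" "f y < 0"
proof -
  have "\<exists>x\<in>A. 0 < f x"
  proof (rule ccontr)
    assume "\<not> (\<exists>x\<in>A. 0 < f x)"
    then have "\<forall>x\<in>A. - f x = 0"
      using sum_nonneg_eq_0_iff[OF assms(1), of "\<lambda>x. - f x"] assms(2) by (simp add: sum_negf not_less)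
    with assms(3) show False
      by simp
  qed
  moreover have "\<exists>y\<in>A. f y < 0"
  proof (rule ccontr)
    assume "\<not> (\<exists>y\<in>A. f y < 0)"
    then have "\<forall>x\<in>A. f x = 0"
      using sum_nonneg_eq_0_iff[OF assms(1), of f] assms(2) by (simp add: not_less)
    with assms(3) show False
      by simp
  qed
  ultimately show ?thesis
    using that by blast
qed

lemma quadratic_root_opposite_signs:
  fixes p c r :: real
  assumes "0 < p" "r < 0"
  obtains k where "p + c * k + r * k * k = 0"
proof -
  define D where "D = c * c - 4 * p * r"
  have "0 < D"
    unfolding D_def using assms by (smt (verit) mult_pos_neg zero_le_square)
  define k where "k = (sqrt D - c) / (2 * r)"
  have "2 * r * k = sqrt D - c"
    unfolding k_def using assms by simp
  moreover have "sqrt D * sqrt D = D"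
    using \<open>0 < D\<close> by simp
  ultimately have "(p + c * k + r * k * k) * (4 * r) = 0"
    unfolding D_def by algebra
  then show ?thesis
    using that assms by simp
qed

lemma span_eq_independent_card:
  fixes A C :: "'a::euclidean_space set"
  assumes "A \<subseteq> span C" "independent A" "independent C" "card A = card C"
  shows "span A = span C"
proof -
  have "card A = dim (span C)"
    using assms(3,4) by (simp add: dim_eq_card_independent)
  then have "span C \<subseteq> span A"
    using card_eq_dim[OF assms(1)] assms(2) finiteI_independent by blast
  then show ?thesis
    using span_minimal[OF assms(1)] by auto
qed

locale inner_product_form =
  fixes B :: "'a::euclidean_space \<Rightarrow> 'a \<Rightarrow> real"
  assumes inner_product: "inner_product B"
begin

lemma bilinear: "bilinear B"
  and sym: "B x y = B y x"
  and pos: "x \<noteq> 0 \<Longrightarrow> 0 < B x x"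
  using inner_product by (auto simp: inner_product_def)

lemma linear_right: "linear (B x)"
  and linear_left: "linear (\<lambda>x. B x y)"
  using bilinear by (simp_all add: bilinear_def)

lemmas add_left [simp] = bilinear_ladd[OF bilinear]
  and add_right [simp] = bilinear_radd[OF bilinear]
  and scale_left [simp] = bilinear_lmul[OF bilinear]
  and scale_right [simp] = bilinear_rmul[OF bilinear]
  and diff_left [simp] = bilinear_lsub[OF bilinear]
  and diff_right [simp] = bilinear_rsub[OF bilinear]
  and neg_right [simp] = bilinear_rneg[OF bilinear]
  and zero_left [simp] = bilinear_lzero[OF bilinear]
  and zero_right [simp] = bilinear_rzero[OF bilinear]

lemma sum_left: "B (\<Sum>v\<in>S. f v) x = (\<Sum>v\<in>S. B (f v) x)"
  by (rule linear_sum[OF linear_left])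

lemma orthogonal_span:
  assumes "\<And>s. s \<in> S \<Longrightarrow> B y s = 0" and "x \<in> span S"
  shows "B y x = 0"
  using real_vector.linear_eq_0_on_span[OF linear_right assms] .

lemma normalized_unit:
  assumes "x \<noteq> 0"
  shows "B ((1 / sqrt (B x x)) *\<^sub>R x) ((1 / sqrt (B x x)) *\<^sub>R x) = 1"
  using pos[OF assms] by simp

lemma orthonormal_subset: "orthonormal_wrt B S \<Longrightarrow> T \<subseteq> S \<Longrightarrow> orthonormal_wrt B T"
  unfolding orthonormal_wrt_def by blast

lemma orthonormal_nonzero:
  assumes "orthonormal_wrt B S" "x \<in> S"
  shows "x \<noteq> 0"
proof -
  have "B x x = 1"
    using assms by (simp add: orthonormal_wrt_def)
  then show ?thesis
    by auto
qed

lemma orthonormal_insert: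
  assumes "orthonormal_wrt B S" "B u u = 1" "\<And>s. s \<in> S \<Longrightarrow> B u s = 0"
  shows "orthonormal_wrt B (insert u S)"
  using assms sym unfolding orthonormal_wrt_def by force

lemma orthonormal_coefficient:
  assumes "orthonormal_wrt B S" "finite S" "t \<in> S"
  shows "B (\<Sum>v\<in>S. u v *\<^sub>R v) t = u t"
proof -
  have "B (\<Sum>v\<in>S. u v *\<^sub>R v) t = (\<Sum>v\<in>S. if v = t then u v else 0)"
    unfolding sum_left by (rule sum.cong) (use assms in \<open>auto simp: orthonormal_wrt_def\<close>)
  then show ?thesis
    using assms by simp
qed

lemma orthonormal_independent:
  assumes "orthonormal_wrt B S"
  shows "independent S"
proof
  assume "dependent S"
  then obtain T u v where T: "finite T" "T \<subseteq> S" "(\<Sum>v\<in>T. u v *\<^sub>R v) = 0"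
    and v: "v \<in> T" "u v \<noteq> 0"
    unfolding real_vector.dependent_explicit by blast
  have "u v = B (\<Sum>v\<in>T. u v *\<^sub>R v) v"
    using orthonormal_coefficient[OF orthonormal_subset[OF assms T(2)] T(1) v(1)] by simp
  with T(3) v(2) show False
    by simp
qed

lemma orthonormal_expansion:
  assumes "orthonormal_wrt B S" "finite S" "x \<in> span S"
  shows "(\<Sum>b\<in>S. B x b *\<^sub>R b) = x"
proof -
  obtain u where u: "x = (\<Sum>v\<in>S. u v *\<^sub>R v)"
    using assms(3) real_vector.span_finite[OF assms(2)] by auto
  then show ?thesis
    using orthonormal_coefficient[OF assms(1,2)] by (auto intro: sum.cong)
qed

lemma orthogonal_unit_vector:
  assumes "subspace W" "finite S" "S \<subseteq> W" "orthonormal_wrt B S" "w \<in> W" "w \<notin> span S"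
  obtains u where "u \<in> W" "B u u = 1" "\<And>s. s \<in> S \<Longrightarrow> B u s = 0"
proof -
  define w' where "w' = w - (\<Sum>s\<in>S. B w s *\<^sub>R s)"
  have proj: "(\<Sum>s\<in>S. B w s *\<^sub>R s) \<in> span S"
    by (intro span_sum span_scale span_base)
  have "w' \<in> W"
    unfolding w'_def using assms by (intro subspace_diff subspace_sum subspace_scale) auto
  moreover have "w' \<noteq> 0"
    using assms(6) proj unfolding w'_def by auto
  moreover have "B w' s = 0" if "s \<in> S" for s
    unfolding w'_def using orthonormal_coefficient[OF assms(4,2) that] by simp
  ultimately show ?thesis
    using assms(1) normalized_unit
    by (intro that[of "(1 / sqrt (B w' w')) *\<^sub>R w'"]) (auto simp: subspace_scale)
qed

lemma orthonormal_basis_extend: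
  assumes "subspace W" "finite S0" "S0 \<subseteq> W" "orthonormal_wrt B S0"
  obtains S where "S0 \<subseteq> S" "S \<subseteq> W" "finite S" "orthonormal_wrt B S" "span S = W"
proof -
  have "\<exists>S. S0 \<subseteq> S \<and> S \<subseteq> W \<and> finite S \<and> orthonormal_wrt B S \<and> span S = W"
    using assms(2-4)
  proof (induction "dim W - card S0" arbitrary: S0 rule: less_induct)
    case less
    show ?case
    proof (cases "W \<subseteq> span S0")
      case True
      then show ?thesis
        using less.prems assms(1) span_minimal[of S0 W] by blast
    next
      case False
      then obtain w where "w \<in> W" "w \<notin> span S0"
        by blast
      then obtain u where u: "u \<in> W" "B u u = 1" "\<And>s. s \<in> S0 \<Longrightarrow> B u s = 0"
        using orthogonal_unit_vector[OF assms(1) less.prems] by blast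
      have "u \<notin> S0"
        using u by force
      have on: "orthonormal_wrt B (insert u S0)"
        using orthonormal_insert[OF less.prems(3) u(2,3)] .
      have "card (insert u S0) \<le> dim W"
        using independent_card_le_dim[OF _ orthonormal_independent[OF on]] u(1) less.prems(2) by simp
      then have "dim W - card (insert u S0) < dim W - card S0"
        using \<open>u \<notin> S0\<close> less.prems(1) by simp
      then show ?thesis
        using less.hyps[of "insert u S0"] less.prems u(1) on by blast
    qed
  qed
  then show ?thesis
    using that by blast
qed

lemma orthonormal_orthogonal_span:
  assumes "orthonormal_wrt B S" "A \<subseteq> S" "y \<in> S - A" "x \<in> span A"
  shows "B y x = 0"
proof -
  have "B y a = 0" if "a \<in> A" for a
    using assms(1-3) that by (auto simp: orthonormal_wrt_def)
  then show ?thesis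
    using orthogonal_span assms(4) by blast
qed

lemma orthonormal_Un:
  assumes "orthonormal_wrt B A" "orthonormal_wrt B C" "\<And>a c. a \<in> A \<Longrightarrow> c \<in> C \<Longrightarrow> B a c = 0"
  shows "orthonormal_wrt B (A \<union> C)"
  unfolding orthonormal_wrt_def
proof (intro ballI)
  fix x y
  assume "x \<in> A \<union> C" "y \<in> A \<union> C"
  then consider "x \<in> A" "y \<in> A" | "x \<in> C" "y \<in> C" | "x \<in> A" "y \<in> C" | "x \<in> C" "y \<in> A"
    by blast
  then show "B x y = (if x = y then 1 else 0)"
  proof cases
    case 3
    then show ?thesis
      using assms(2) assms(3)[of x y] by (auto simp: orthonormal_wrt_def)
  next
    case 4
    then show ?thesis
      using assms(2) assms(3)[of y x] sym[of x y] by (auto simp: orthonormal_wrt_def)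
  qed (use assms(1,2) in \<open>simp_all add: orthonormal_wrt_def\<close>)
qed

lemma orthonormal_replace:
  assumes "orthonormal_wrt B S" "T \<subseteq> S" "orthonormal_wrt B T'" "span T' = span T"
  shows "orthonormal_wrt B ((S - T) \<union> T')" and "span ((S - T) \<union> T') = span S"
proof -
  have "B a c = 0" if "a \<in> S - T" "c \<in> T'" for a c
    using orthonormal_orthogonal_span[OF assms(1,2) that(1)] assms(4) span_base[OF that(2)] by simp
  then show "orthonormal_wrt B ((S - T) \<union> T')"
    using orthonormal_Un[OF orthonormal_subset[OF assms(1)] assms(3)] by blast
  have "span ((S - T) \<union> T') = span ((S - T) \<union> T)"
    by (simp only: span_Un assms(4))
  also have "\<dots> = span S"
    using assms(2) by (simp add: Un_absorb2)
  finally show "span ((S - T) \<union> T') = span S" .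
qed

lemma trace_map_orthonormal_basis:
  assumes "linear f" "orthonormal_wrt B S" "finite S" "span S = UNIV"
  shows "trace_map f = (\<Sum>b\<in>S. B b (f b))"
proof -
  have "trace_map f = (\<Sum>b\<in>S. B (f b) b)"
    using assms orthonormal_expansion[OF assms(2,3)] linear_left
    by (intro trace_map_coordinates) auto
  then show ?thesis
    by (simp add: sym)
qed

section \<open>Orthonormal bases of isotropic vectors\<close>

lemma quadratic_form_pair:
  assumes "linear L"
  shows "B (a *\<^sub>R x + b *\<^sub>R y) (L (a *\<^sub>R x + b *\<^sub>R y)) =
    a * a * B x (L x) + a * b * (B x (L y) + B y (L x)) + b * b * B y (L y)"
  by (simp add: linear_add[OF assms] linear_scale[OF assms] algebra_simps)

lemma isotropic_rotation:
  assumes L: "linear L" and on: "orthonormal_wrt B {t1, t2}" "t1 \<noteq> t2"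
    and sign: "0 < B t1 (L t1)" "B t2 (L t2) < 0"
  obtains v w where "orthonormal_wrt B {v, w}" "v \<noteq> w" "span {v, w} = span {t1, t2}"
    "B v (L v) = 0" "B w (L w) = B t1 (L t1) + B t2 (L t2)"
proof -
  define p r c where "p = B t1 (L t1)" and "r = B t2 (L t2)"
    and "c = B t1 (L t2) + B t2 (L t1)"
  obtain k where root: "p + c * k + r * k * k = 0"
    using quadratic_root_opposite_signs sign unfolding p_def r_def by blast
  have t: "B t1 t1 = 1" "B t2 t2 = 1" "B t1 t2 = 0" "B t2 t1 = 0"
    using on by (auto simp: orthonormal_wrt_def)
  define v' w' where "v' = t1 + k *\<^sub>R t2" and "w' = (- k) *\<^sub>R t1 + t2"
  define N where "N = 1 + k * k"
  have "0 < N"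
    unfolding N_def by (simp add: add_pos_nonneg)
  have norms: "B v' v' = N" "B w' w' = N" "B v' w' = 0"
    unfolding v'_def w'_def N_def using t by (simp_all add: algebra_simps)
  have qv': "B v' (L v') = 0" and qw': "B w' (L w') = N * (p + r)"
    using quadratic_form_pair[OF L, of 1 t1 k t2] quadratic_form_pair[OF L, of "- k" t1 1 t2] root
    unfolding v'_def w'_def N_def p_def r_def c_def by (simp_all add: algebra_simps)
  define v w where "v = (1 / sqrt N) *\<^sub>R v'" and "w = (1 / sqrt N) *\<^sub>R w'"
  have "B v v = 1" "B w w = 1" "B v w = 0" "B w v = 0"
    unfolding v_def w_def using norms \<open>0 < N\<close> sym[of w' v'] by simp_all
  then have on_vw: "orthonormal_wrt B {v, w}" and "v \<noteq> w"
    by (auto simp: orthonormal_wrt_def)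
  moreover have "span {v, w} = span {t1, t2}"
  proof -
    have "{v, w} \<subseteq> span {t1, t2}"
      unfolding v_def w_def v'_def w'_def
      by (intro insert_subsetI empty_subsetI span_scale span_add span_base; simp)
    then show ?thesis
    using \<open>v \<noteq> w\<close> on(2) orthonormal_independent[OF on(1)] orthonormal_independent[OF on_vw]
      by (intro span_eq_independent_card) auto
  qed
  moreover have "B v (L v) = 0" "B w (L w) = p + r"
    unfolding v_def w_def using qv' qw' \<open>0 < N\<close> by (simp_all add: linear_scale[OF L])
  ultimately show ?thesis
    using that unfolding p_def r_def by blast
qed

lemma isotropic_split_off:
  assumes L: "linear L" and fin: "finite T" and on: "orthonormal_wrt B T"
    and trace: "(\<Sum>t\<in>T. B t (L t)) = 0" and "\<exists>t\<in>T. B t (L t) \<noteq> 0"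
  obtains v T2 where "B v v = 1" "B v (L v) = 0" "finite T2" "orthonormal_wrt B T2"
    "card T2 < card T" "(\<Sum>t\<in>T2. B t (L t)) = 0" "\<forall>x\<in>T2. B v x = 0"
    "span (insert v T2) = span T"
proof -
  obtain t1 t2 where t: "t1 \<in> T" "t2 \<in> T" "0 < B t1 (L t1)" "B t2 (L t2) < 0"
    using sum_eq_0_obtains_opposite_signs[OF fin trace assms(5)] by blast
  then have "t1 \<noteq> t2"
    by auto
  obtain v w where vw: "orthonormal_wrt B {v, w}" "v \<noteq> w" "span {v, w} = span {t1, t2}"
    "B v (L v) = 0" "B w (L w) = B t1 (L t1) + B t2 (L t2)"
    using isotropic_rotation[OF L orthonormal_subset[OF on] \<open>t1 \<noteq> t2\<close> t(3,4)] t(1,2) by blast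
  then have vw_vals: "B v v = 1" "B w w = 1" "B v w = 0"
    by (auto simp: orthonormal_wrt_def)
  define R where "R = T - {t1, t2}"
  have T_eq: "T = insert t1 (insert t2 R)" and R: "finite R" "t1 \<notin> R" "t2 \<notin> R"
    unfolding R_def using t(1,2) fin by auto
  have perp_R: "B x y = 0" if "x \<in> {v, w}" "y \<in> R" for x y
  proof -
    have "B y x = 0"
      using orthonormal_orthogonal_span[OF on, of "{t1, t2}" y x] t(1,2) \<open>y \<in> R\<close> vw(3)
        span_base[OF \<open>x \<in> {v, w}\<close>] by (simp add: R_def)
    then show ?thesis
      using sym[of x y] by simp
  qed
  have "w \<notin> R"
    using perp_R[of w w] vw_vals by auto
  show ?thesis
  proof (rule that[of v "insert w R"])
    show "orthonormal_wrt B (insert w R)"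
      using perp_R vw_vals orthonormal_subset[OF on, of R]
      by (intro orthonormal_insert) (auto simp: R_def)
    show "card (insert w R) < card T"
      using R \<open>w \<notin> R\<close> \<open>t1 \<noteq> t2\<close> by (subst T_eq) simp
    show "(\<Sum>t\<in>insert w R. B t (L t)) = 0"
      using trace R \<open>w \<notin> R\<close> \<open>t1 \<noteq> t2\<close> vw(5) by (subst (asm) T_eq) simp
    have "insert v (insert w R) = {v, w} \<union> R"
      by auto
    also have "span \<dots> = span ({t1, t2} \<union> R)"
      by (simp only: span_Un vw(3))
    finally show "span (insert v (insert w R)) = span T"
      using T_eq by simp
    show "\<forall>x\<in>insert w R. B v x = 0"
      using vw_vals(3) perp_R by blast
    show "B v v = 1" "B v (L v) = 0" "finite (insert w R)"
      using vw(4) vw_vals(1) R(1) by simp_all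
  qed
qed

lemma isotropic_orthonormal_basis:
  assumes L: "linear L" and "finite T" "orthonormal_wrt B T" "(\<Sum>t\<in>T. B t (L t)) = 0"
  obtains T' where "finite T'" "orthonormal_wrt B T'" "span T' = span T" "\<forall>t\<in>T'. B t (L t) = 0"
proof -
  have "\<exists>T'. finite T' \<and> orthonormal_wrt B T' \<and> span T' = span T \<and> (\<forall>t\<in>T'. B t (L t) = 0)"
    using assms(2-4)
  proof (induction "card T" arbitrary: T rule: less_induct)
    case less
    show ?case
    proof (cases "\<forall>t\<in>T. B t (L t) = 0")
      case True
      then show ?thesis
        using less.prems by blast
    next
      case False
      then have "\<exists>t\<in>T. B t (L t) \<noteq> 0"
        by blast
      then obtain v T2 where v: "B v v = 1" "B v (L v) = 0"
        and T2: "finite T2" "orthonormal_wrt B T2" "card T2 < card T" "(\<Sum>t\<in>T2. B t (L t)) = 0"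
        and v_T2: "\<forall>x\<in>T2. B v x = 0" and span_T2: "span (insert v T2) = span T"
        by (rule isotropic_split_off[OF L less.prems])
      obtain T3 where T3: "finite T3" "orthonormal_wrt B T3" "span T3 = span T2"
        "\<forall>t\<in>T3. B t (L t) = 0"
        using less.hyps[OF T2(3) T2(1,2,4)] by blast
      have "B v x = 0" if "x \<in> T3" for x
        using orthogonal_span[of T2 v x] v_T2 T3(3) span_base[OF that] by simp
      then have "orthonormal_wrt B (insert v T3)"
        by (rule orthonormal_insert[OF T3(2) v(1)])
      moreover have "span (insert v T3) = span (insert v T2)"
        by (simp only: span_insert T3(3))
      ultimately show ?thesis
        using T3(1,4) v(2) span_T2 by auto
    qed
  qed
  then show ?thesis
    using that by blast
qed

end

section \<open>Lie algebras with a Heisenberg ideal of codimension one\<close>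

locale lie_bracket =
  fixes br :: "'a::euclidean_space \<Rightarrow> 'a \<Rightarrow> 'a"
  assumes lie_algebra: "lie_algebra br"
begin

lemma bilinear: "bilinear br"
  and alternating [simp]: "br x x = 0"
  and jacobi: "br x (br y w) + br y (br w x) + br w (br x y) = 0"
  using lie_algebra by (simp_all add: lie_algebra_def)

lemma linear_right: "linear (br x)"
  and linear_left: "linear (\<lambda>x. br x y)"
  using bilinear by (simp_all add: bilinear_def)

lemmas add_left [simp] = bilinear_ladd[OF bilinear]
  and add_right [simp] = bilinear_radd[OF bilinear]
  and scale_left [simp] = bilinear_lmul[OF bilinear]
  and scale_right [simp] = bilinear_rmul[OF bilinear]
  and neg_right [simp] = bilinear_rneg[OF bilinear]

lemma antisym: "br x y = - br y x"
proof -
  have "br (x + y) (x + y) = br x x + br y x + (br x y + br y y)"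
    by (simp only: add_left add_right)
  then have "br x y + br y x = 0"
    by (simp add: add.commute)
  then show ?thesis
    by (simp add: eq_neg_iff_add_eq_0)
qed

end

locale codim_one_heisenberg = lie_bracket br
  for br :: "'a::euclidean_space \<Rightarrow> 'a \<Rightarrow> 'a" +
  fixes m :: nat and h :: "'a set" and X :: "nat \<Rightarrow> 'a" and e :: 'a
  assumes m_pos: "1 \<le> m" and ideal: "lie_ideal br h" and codim: "dim h + 1 = DIM('a)"
    and heisenberg: "heisenberg_basis br m h X" and e_notin: "e \<notin> h"
begin

declare sum.cl_ivl_Suc [simp del]

abbreviation "I \<equiv> {1..2 * m + 1}"
abbreviation "z \<equiv> X (2 * m + 1)"

definition "basis = insert e (X ` I)"
definition "coord k v = representation basis v (X k)"

lemma subspace_h: "subspace h"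
  and bracket_mem_ideal: "x \<in> h \<Longrightarrow> br y x \<in> h"
  using ideal by (simp_all add: lie_ideal_def)

lemma inj_X: "inj_on X I"
  and independent_X: "independent (X ` I)"
  and span_X: "span (X ` I) = h"
  and bracket_X: "i \<in> I \<Longrightarrow> j \<in> I \<Longrightarrow> br (X i) (X j) =
    (if i \<le> m \<and> j = i + m then z else if j \<le> m \<and> i = j + m then - z else 0)"
  using heisenberg by (simp_all add: heisenberg_basis_def)

lemma X_in_h: "k \<in> I \<Longrightarrow> X k \<in> h"
  using span_X span_base[of "X k" "X ` I"] by auto

lemma z_nonzero: "z \<noteq> 0"
  using independent_X real_vector.dependent_zero[of "X ` I"] by force

lemma e_notin_X: "e \<notin> X ` I"
  using e_notin X_in_h by auto

lemma finite_basis: "finite basis"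
  and independent_basis: "independent basis"
  using independent_insertI[OF _ independent_X] e_notin span_X by (simp_all add: basis_def)

lemma span_basis: "span basis = UNIV"
proof -
  have "card basis = 2 * m + 2"
    unfolding basis_def using e_notin_X card_image[OF inj_X] by simp
  moreover have "dim h = card (X ` I)"
    by (metis dim_span_eq_card_independent independent_X span_X)
  then have "dim h = 2 * m + 1"
    using card_image[OF inj_X] by simp
  ultimately have "card basis = dim (UNIV :: 'a set)"
    using codim by simp
  then show ?thesis
    using card_eq_dim[of basis UNIV] finite_basis independent_basis by auto
qed

lemma linear_representation: "linear (\<lambda>v. representation basis v b)"
  using bounded_linear.linear[OF bounded_linear_representation[OF independent_basis span_basis]] .

lemma sum_representation: "(\<Sum>b\<in>basis. representation basis v b *\<^sub>R b) = v"
  using real_vector.sum_representation_eq[OF independent_basis _ finite_basis] span_basis by auto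

lemma representation_basis:
  "b \<in> basis \<Longrightarrow> representation basis b b' = (if b' = b then 1 else 0)"
  using real_vector.representation_basis[OF independent_basis] by simp

lemma linear_coord: "linear (coord k)"
  unfolding coord_def[abs_def] by (rule linear_representation)

lemmas coord_scale [simp] = linear_scale[OF linear_coord]
  and coord_zero [simp] = linear_0[OF linear_coord]

lemma coord_X: "k \<in> I \<Longrightarrow> j \<in> I \<Longrightarrow> coord j (X k) = (if j = k then 1 else 0)"
  unfolding coord_def using representation_basis[of "X k" "X j"] inj_X
  by (auto simp: basis_def inj_on_eq_iff)

lemma representation_e_ideal:
  assumes "u \<in> h"
  shows "representation basis u e = 0"
proof (rule real_vector.linear_eq_0_on_span[OF linear_representation])
  show "u \<in> span (X ` I)"
    using assms span_X by simp
next
  fix x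
  assume "x \<in> X ` I"
  moreover from this have "x \<in> basis" and "e \<noteq> x"
    using e_notin_X by (auto simp: basis_def)
  ultimately show "representation basis x e = 0"
    using representation_basis[of x e] by simp
qed

lemma sum_basis: "(\<Sum>b\<in>basis. f b) = f e + (\<Sum>k\<in>I. f (X k))"
  unfolding basis_def using e_notin_X sum.reindex[OF inj_X, of f] by (simp add: comp_def del: sum.cl_ivl_Suc)

lemma ideal_expansion: "u \<in> h \<Longrightarrow> (\<Sum>k\<in>I. coord k u *\<^sub>R X k) = u"
  using sum_representation[of u] sum_basis[of "\<lambda>b. representation basis u b *\<^sub>R b"]
    representation_e_ideal[of u]
  by (simp add: coord_def)

lemma bracket_ideal_X_sum:
  assumes "u \<in> h"
  shows "br u (X j) = (\<Sum>k\<in>I. coord k u *\<^sub>R br (X k) (X j))"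
proof -
  have "br u (X j) = br (\<Sum>k\<in>I. coord k u *\<^sub>R X k) (X j)"
    using ideal_expansion[OF assms] by simp
  then show ?thesis
    by (simp add: linear_sum[OF linear_left])
qed

lemma bracket_ideal_upper:
  assumes "u \<in> h" "i \<in> {1..m}"
  shows "br u (X (i + m)) = coord i u *\<^sub>R z"
proof -
  have "br u (X (i + m)) = (\<Sum>k\<in>I. if k = i then coord k u *\<^sub>R z else 0)"
    unfolding bracket_ideal_X_sum[OF assms(1)] using assms(2)
    by (intro sum.cong) (auto simp: bracket_X)
  then show ?thesis
    using assms(2) by simp
qed

lemma bracket_ideal_lower:
  assumes "u \<in> h" "i \<in> {1..m}"
  shows "br u (X i) = - (coord (i + m) u *\<^sub>R z)"
proof -
  have "br u (X i) = (\<Sum>k\<in>I. if k = i + m then - (coord k u *\<^sub>R z) else 0)"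
    unfolding bracket_ideal_X_sum[OF assms(1)] using assms(2)
    by (intro sum.cong) (auto simp: bracket_X)
  then show ?thesis
    using assms(2) by simp
qed

lemma bracket_ideal_center: "u \<in> h \<Longrightarrow> br u z = 0"
  unfolding bracket_ideal_X_sum by (intro sum.neutral) (auto simp: bracket_X)

lemma bracket_ideal_ideal:
  assumes "u \<in> h" "w \<in> h"
  obtains a where "br u w = a *\<^sub>R z"
proof -
  have "br u w = br (\<Sum>k\<in>I. coord k u *\<^sub>R X k) (\<Sum>j\<in>I. coord j w *\<^sub>R X j)"
    using ideal_expansion assms by simp
  also have "\<dots> = (\<Sum>(k, j)\<in>I \<times> I. br (coord k u *\<^sub>R X k) (coord j w *\<^sub>R X j))"
    by (rule bilinear_sum[OF bilinear])
  finally have expansion: "br u w = (\<Sum>(k, j)\<in>I \<times> I. (coord k u * coord j w) *\<^sub>R br (X k) (X j))"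
    by (simp add: mult.commute)
  have "br (X k) (X j) \<in> span {z}" if "k \<in> I" "j \<in> I" for k j
    using that by (simp add: bracket_X span_base span_neg span_zero)
  then have "br u w \<in> span {z}"
    unfolding expansion by (intro span_sum) (auto intro: span_scale)
  then show ?thesis
    using that by (auto simp: span_singleton)
qed

lemma decompose:
  obtains u t where "u \<in> h" "x = u + t *\<^sub>R e"
proof -
  have "x \<in> span (insert e (X ` I))"
    using span_basis by (simp add: basis_def)
  then obtain t where "x - t *\<^sub>R e \<in> span (X ` I)"
    by (auto simp: span_breakdown_eq)
  then have "x - t *\<^sub>R e \<in> h"
    using span_X by simp
  then show ?thesis
    using that[of "x - t *\<^sub>R e" t] by simp
qed

lemma bracket_in_ideal: "br x y \<in> h"
proof -
  obtain u t where u: "u \<in> h" and x: "x = u + t *\<^sub>R e"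
    using decompose by blast
  obtain u' t' where u': "u' \<in> h" and y: "y = u' + t' *\<^sub>R e"
    using decompose by blast
  have "br u y \<in> h"
    using bracket_mem_ideal[OF u, of y] antisym[of u y] subspace_h by (simp add: subspace_neg)
  moreover have "br e y \<in> h"
    using bracket_mem_ideal[OF u', of e] by (simp add: y)
  ultimately show ?thesis
    using subspace_h by (simp add: x subspace_add subspace_scale)
qed

text \<open>The eigenvalue of \<open>ad e\<close> on the centre of \<open>h\<close>, read off as a coordinate so that it is
  defined before \<open>z\<close> is known to be an eigenvector.\<close>

definition "lam = coord (2 * m + 1) (br e z)"

lemma jacobi_pair:
  assumes i: "i \<in> {1..m}"
  shows "br e z = (coord i (br e (X i)) + coord (i + m) (br e (X (i + m)))) *\<^sub>R z"
proof -
  have "br (X i) (X (i + m)) = z"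
    using i by (simp add: bracket_X)
  have "br (X i) (br (X (i + m)) e) = - (coord (i + m) (br e (X (i + m))) *\<^sub>R z)"
    using bracket_ideal_lower[OF bracket_in_ideal i] antisym[of "X i"] antisym[of "X (i + m)" e]
    by simp
  moreover have "br (X (i + m)) (br e (X i)) = - (coord i (br e (X i)) *\<^sub>R z)"
    using bracket_ideal_upper[OF bracket_in_ideal i] antisym[of "X (i + m)"] by simp
  moreover have "br e z = - (br (X i) (br (X (i + m)) e) + br (X (i + m)) (br e (X i)))"
    using jacobi[of e "X i" "X (i + m)"]
    by (simp only: \<open>br (X i) (X (i + m)) = z\<close> eq_neg_iff_add_eq_0 add.assoc)
  ultimately show ?thesis
    by (simp add: scaleR_add_left add.commute)
qed

lemma bracket_e_center: "br e z = lam *\<^sub>R z"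
proof -
  obtain a where a: "br e z = a *\<^sub>R z"
    using jacobi_pair[of 1] m_pos by auto
  then have "lam = a"
    unfolding lam_def by (simp add: coord_X)
  with a show ?thesis
    by simp
qed

lemma jacobi_pair_lam: "i \<in> {1..m} \<Longrightarrow> coord i (br e (X i)) + coord (i + m) (br e (X (i + m))) = lam"
  using jacobi_pair[of i] bracket_e_center z_nonzero by (metis scaleR_cancel_right)

lemma trace_split:
  assumes "linear f"
  shows "trace_map f = representation basis (f e) e + (\<Sum>k\<in>I. coord k (f (X k)))"
proof -
  have "trace_map f = (\<Sum>b\<in>basis. representation basis (f b) b)"
    using assms linear_representation sum_representation by (intro trace_map_coordinates) auto
  then show ?thesis
    by (simp add: sum_basis coord_def)
qed

lemma sum_heisenberg_index:
  "(\<Sum>k\<in>I. g k) = (\<Sum>i=1..m. g i + g (i + m)) + g (2 * m + 1)"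
proof -
  have "(\<Sum>k\<in>I. g k) = (\<Sum>k=1..m + m. g k) + g (2 * m + 1)"
    by (simp add: sum.cl_ivl_Suc mult_2)
  also have "(\<Sum>k=1..m + m. g k) = (\<Sum>k=1..m. g k) + (\<Sum>k=m + 1..m + m. g k)"
    by (rule sum.ub_add_nat) simp
  also have "(\<Sum>k=m + 1..m + m. g k) = (\<Sum>i=1..m. g (i + m))"
    using sum.shift_bounds_cl_nat_ivl[of g 1 m m] by (simp add: add.commute)
  finally show ?thesis
    by (simp add: sum.distrib)
qed

lemma trace_ad_e: "trace_map (br e) = (m + 1) * lam"
proof -
  have "trace_map (br e) = (\<Sum>k\<in>I. coord k (br e (X k)))"
    using trace_split[OF linear_right] by (simp add: real_vector.representation_zero)
  also have "\<dots> = (\<Sum>i=1..m. lam) + lam"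
    unfolding sum_heisenberg_index using jacobi_pair_lam by (simp add: lam_def)
  finally show ?thesis
    by (simp add: algebra_simps)
qed

lemma trace_ad_ideal:
  assumes "u \<in> h"
  shows "trace_map (br u) = 0"
proof -
  have "coord k (br u (X k)) = 0" if k: "k \<in> I" for k
  proof (cases "k = 2 * m + 1")
    case True
    then show ?thesis
      using bracket_ideal_center[OF assms] by simp
  next
    case False
    obtain a where "br u (X k) = a *\<^sub>R z"
      using bracket_ideal_ideal[OF assms X_in_h[OF k]] .
    then show ?thesis
      using False k by (simp add: coord_X)
  qed
  then show ?thesis
    using trace_split[OF linear_right, of u] representation_e_ideal[OF bracket_in_ideal] by simp
qed

lemma unimodular_iff_lam: "unimodular br \<longleftrightarrow> lam = 0"
proof
  assume "unimodular br"
  then show "lam = 0"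
    using trace_ad_e by (simp add: unimodular_def)
next
  assume "lam = 0"
  have "trace_map (br x) = 0" for x
  proof -
    obtain u t where "u \<in> h" "x = u + t *\<^sub>R e"
      using decompose .
    then have "br x = (\<lambda>y. br u y + t *\<^sub>R br e y)"
      by auto
    then show ?thesis
      using trace_map_add_scale[of "br u" t "br e"] trace_ad_ideal[OF \<open>u \<in> h\<close>] trace_ad_e
        \<open>lam = 0\<close> by simp
  qed
  then show "unimodular br"
    by (simp add: unimodular_def)
qed

section \<open>Geodesic elements\<close>

lemma bracket_ideal_onto_center:
  assumes "u \<in> h" "u \<notin> span {z}"
  obtains Y where "br u Y = z"
proof -
  have "\<exists>k\<in>{1..2 * m}. coord k u \<noteq> 0"
  proof (rule ccontr)
    assume "\<not> (\<exists>k\<in>{1..2 * m}. coord k u \<noteq> 0)"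
    then have "u = coord (2 * m + 1) u *\<^sub>R z"
      using ideal_expansion[OF assms(1)] by (simp add: sum.cl_ivl_Suc)
    with assms(2) show False
      by (metis span_base span_scale singletonI)
  qed
  then obtain k where k: "k \<in> {1..2 * m}" "coord k u \<noteq> 0"
    by blast
  show ?thesis
  proof (cases "k \<le> m")
    case True
    then have "br u (X (k + m)) = coord k u *\<^sub>R z"
      using bracket_ideal_upper[OF assms(1)] k(1) by simp
    then show ?thesis
      using k(2) that[of "(1 / coord k u) *\<^sub>R X (k + m)"] by simp
  next
    case False
    then have "k - m \<in> {1..m}"
      using k(1) by auto
    then have "br u (X (k - m)) = - (coord k u *\<^sub>R z)"
      using bracket_ideal_lower[OF assms(1)] False by simp
    then show ?thesis
      using k(2) that[of "(- 1 / coord k u) *\<^sub>R X (k - m)"] by simp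
  qed
qed

lemma geodesic_orthogonal_center:
  assumes "inner_product B" "lam \<noteq> 0" "geodesic_element B br x"
  shows "B x z = 0"
proof -
  interpret B: inner_product_form B
    by (rule inner_product_form.intro) fact
  have "x \<noteq> 0" and geodesic: "\<And>Y. B x (br x Y) = 0"
    using assms(3) by (auto simp: geodesic_element_def)
  obtain u t where u: "u \<in> h" and x: "x = u + t *\<^sub>R e"
    using decompose .
  consider "t \<noteq> 0" | "t = 0" "u \<notin> span {z}" | "t = 0" "u \<in> span {z}"
    by blast
  then show ?thesis
  proof cases
    case 1
    have "br x z = (t * lam) *\<^sub>R z"
      using bracket_ideal_center[OF u] bracket_e_center by (simp add: x)
    then show ?thesis
      using geodesic[of z] 1 assms(2) by simp
  next
    case 2
    then obtain Y where "br u Y = z"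
      using bracket_ideal_onto_center u by blast
    then show ?thesis
      using geodesic[of Y] 2 x by simp
  next
    case 3
    then obtain a where "x = a *\<^sub>R z" "a \<noteq> 0"
      using x \<open>x \<noteq> 0\<close> by (auto simp: span_singleton)
    moreover have "br z e = - (lam *\<^sub>R z)"
      using antisym[of z e] bracket_e_center by simp
    ultimately have "B x (br x e) = - (a * a * lam) * B z z"
      by simp
    moreover have "0 < B z z"
      using B.pos[OF z_nonzero] .
    ultimately show ?thesis
      using geodesic[of e] \<open>a \<noteq> 0\<close> assms(2) by simp
  qed
qed

lemma no_geodesic_basis:
  assumes "inner_product B" "lam \<noteq> 0"
  shows "\<not> geodesic_basis B br S"
proof
  interpret B: inner_product_form B
    by (rule inner_product_form.intro) fact
  assume "geodesic_basis B br S"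
  then have "B z x = 0" if "x \<in> S" for x
    using geodesic_orthogonal_center[OF assms] B.sym that by (metis geodesic_basis_def)
  moreover have "span S = UNIV"
    using \<open>geodesic_basis B br S\<close> by (simp add: geodesic_basis_def)
  ultimately have "B z z = 0"
    using B.orthogonal_span by blast
  then show False
    using B.pos[OF z_nonzero] by simp
qed

lemma center_central:
  assumes "lam = 0"
  shows "br x z = 0"
proof -
  obtain u t where "u \<in> h" "x = u + t *\<^sub>R e"
    using decompose .
  then show ?thesis
    using bracket_ideal_center bracket_e_center assms by simp
qed

lemma geodesic_if_orthogonal_ideal:
  assumes "x \<noteq> 0" "\<forall>w\<in>h. B x w = 0"
  shows "geodesic_element B br x"
  using assms bracket_in_ideal by (simp add: geodesic_element_def)

lemma geodesic_if_central:
  assumes "inner_product B" "x \<noteq> 0" "\<And>Y. br x Y = 0"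
  shows "geodesic_element B br x"
proof -
  interpret B: inner_product_form B
    by (rule inner_product_form.intro) fact
  show ?thesis
    using assms(2,3) by (simp add: geodesic_element_def)
qed

lemma geodesic_in_ideal:
  assumes "inner_product B" "x \<in> h" "x \<noteq> 0" "B x z = 0" "B x (br e x) = 0"
  shows "geodesic_element B br x"
  unfolding geodesic_element_def
proof (intro conjI allI)
  interpret B: inner_product_form B
    by (rule inner_product_form.intro) fact
  fix Y
  obtain u t where u: "u \<in> h" and Y: "Y = u + t *\<^sub>R e"
    using decompose .
  obtain a where "br x u = a *\<^sub>R z"
    using bracket_ideal_ideal[OF assms(2) u] .
  then have "br x Y = a *\<^sub>R z - t *\<^sub>R br e x"
    using antisym[of x e] by (simp add: Y)
  then show "B x (br x Y) = 0"
    using assms(4,5) by simp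
qed (fact assms(3))

lemma geodesic_isotropic:
  assumes "inner_product B" "geodesic_element B br x"
  shows "B x (br e x) = 0"
proof -
  interpret B: inner_product_form B
    by (rule inner_product_form.intro) fact
  show ?thesis
    using assms(2) antisym[of e x] by (simp add: geodesic_element_def)
qed

lemma adapted_orthonormal_basis:
  assumes "inner_product B" "lam = 0"
  obtains Sg T where "finite Sg" "orthonormal_wrt B Sg" "span Sg = UNIV" "T \<subseteq> Sg" "T \<subseteq> h"
    "\<And>t. t \<in> T \<Longrightarrow> B t z = 0" "\<And>b. b \<in> Sg - T \<Longrightarrow> geodesic_element B br b"
proof -
  interpret B: inner_product_form B
    by (rule inner_product_form.intro) fact
  define zu where "zu = (1 / sqrt (B z z)) *\<^sub>R z"
  have zu: "B zu zu = 1" "zu \<in> h" "\<And>Y. br zu Y = 0"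
    unfolding zu_def using B.normalized_unit[OF z_nonzero] subspace_h X_in_h[of "2 * m + 1"]
      center_central[OF assms(2)] antisym[of z] by (auto simp: subspace_scale)
  obtain Sh where Sh: "{zu} \<subseteq> Sh" "Sh \<subseteq> h" "finite Sh" "orthonormal_wrt B Sh" "span Sh = h"
    using B.orthonormal_basis_extend[OF subspace_h, of "{zu}"] zu by (auto simp: orthonormal_wrt_def)
  obtain Sg where Sg: "Sh \<subseteq> Sg" "finite Sg" "orthonormal_wrt B Sg" "span Sg = UNIV"
    using B.orthonormal_basis_extend[OF subspace_UNIV Sh(3) _ Sh(4)] by auto
  have perp_z: "B t z = 0" if "t \<in> Sh - {zu}" for t
  proof -
    have "B t zu = 0"
      using Sh(1,4) that by (auto simp: orthonormal_wrt_def)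
    then show ?thesis
      using B.pos[OF z_nonzero] by (simp add: zu_def)
  qed
  show ?thesis
  proof (rule that[of Sg "Sh - {zu}"])
    fix b
    assume b: "b \<in> Sg - (Sh - {zu})"
    then have "b \<noteq> 0"
      using B.orthonormal_nonzero[OF Sg(3)] by blast
    show "geodesic_element B br b"
    proof (cases "b = zu")
      case True
      then show ?thesis
        using geodesic_if_central[OF assms(1) \<open>b \<noteq> 0\<close>] zu(3) by blast
    next
      case False
      then show ?thesis
        using geodesic_if_orthogonal_ideal[OF \<open>b \<noteq> 0\<close>] b Sh(5)
          B.orthonormal_orthogonal_span[OF Sg(3,1), of b] by blast
    qed
  qed (use Sg Sh perp_z in auto)
qed

lemma trace_ad_e_geodesic_complement:
  assumes "inner_product B" "lam = 0" "finite S" "orthonormal_wrt B S" "span S = UNIV" "T \<subseteq> S"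
    "\<And>b. b \<in> S - T \<Longrightarrow> geodesic_element B br b"
  shows "(\<Sum>t\<in>T. B t (br e t)) = 0"
proof -
  interpret B: inner_product_form B
    by (rule inner_product_form.intro) fact
  have "0 = trace_map (br e)"
    using trace_ad_e assms(2) by simp
  also have "\<dots> = (\<Sum>t\<in>T. B t (br e t)) + (\<Sum>b\<in>S - T. B b (br e b))"
    using B.trace_map_orthonormal_basis[OF linear_right assms(4,3,5)] sum.subset_diff[OF assms(6,3)]
    by (simp add: add.commute)
  also have "(\<Sum>b\<in>S - T. B b (br e b)) = 0"
    using geodesic_isotropic[OF assms(1,7)] by simp
  finally show ?thesis
    by simp
qed

lemma orthonormal_geodesic_basis:
  assumes "inner_product B" "lam = 0"
  obtains S where "geodesic_basis B br S" "orthonormal_wrt B S"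
proof -
  interpret B: inner_product_form B
    by (rule inner_product_form.intro) fact
  obtain Sg T where Sg: "finite Sg" "orthonormal_wrt B Sg" "span Sg = UNIV" "T \<subseteq> Sg" "T \<subseteq> h"
    and T_z: "\<And>t. t \<in> T \<Longrightarrow> B t z = 0" and rest: "\<And>b. b \<in> Sg - T \<Longrightarrow> geodesic_element B br b"
    using adapted_orthonormal_basis[OF assms] by blast
  obtain T' where T': "finite T'" "orthonormal_wrt B T'" "span T' = span T"
    "\<forall>t\<in>T'. B t (br e t) = 0"
    using B.isotropic_orthonormal_basis[OF linear_right finite_subset[OF Sg(4,1)]
        B.orthonormal_subset[OF Sg(2,4)] trace_ad_e_geodesic_complement[OF assms Sg(1-4) rest]]
    by blast
  define S where "S = (Sg - T) \<union> T'"
  have S: "orthonormal_wrt B S" "span S = UNIV"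
    using B.orthonormal_replace[OF Sg(2,4) T'(2,3)] Sg(3) by (simp_all add: S_def)
  have "geodesic_element B br x" if "x \<in> T'" for x
  proof -
    have "x \<in> span T"
      using T'(3) span_base[OF that] by simp
    then have "x \<in> h"
      using span_minimal[OF Sg(5) subspace_h] by blast
    have "B z x = 0"
      using B.orthogonal_span[of T z x] T_z B.sym[of z] \<open>x \<in> span T\<close> by simp
    then show ?thesis
      using geodesic_in_ideal[OF assms(1) \<open>x \<in> h\<close> B.orthonormal_nonzero[OF T'(2) that]]
        B.sym[of x z] T'(4) that by simp
  qed
  then have "\<forall>x\<in>S. geodesic_element B br x"
    using rest by (auto simp: S_def)
  then show ?thesis
    using that S B.orthonormal_independent[OF S(1)] by (simp add: geodesic_basis_def)
qed

end

theorem theorem1p4: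
  fixes br :: "'a::euclidean_space \<Rightarrow> 'a \<Rightarrow> 'a" and m :: nat and h :: "'a set"
  assumes "lie_algebra br"
    and "m \<ge> 1"
    and "lie_ideal br h"
    and "dim h + 1 = DIM('a)"
    and "isomorphic_to_heisenberg br m h"
  shows "(\<not> unimodular br \<longrightarrow>
            (\<forall>B. inner_product B \<longrightarrow> \<not> (\<exists>S. geodesic_basis B br S))) \<and>
         (unimodular br \<longrightarrow>
            (\<forall>B. inner_product B \<longrightarrow> (\<exists>S. geodesic_basis B br S \<and> orthonormal_wrt B S)))"
proof -
  obtain X where X: "heisenberg_basis br m h X"
    using assms(5) by (auto simp: isomorphic_to_heisenberg_def)
  have "h \<noteq> UNIV"
    using assms(4) by auto
  then obtain e where "e \<notin> h"
    by blast
  interpret codim_one_heisenberg br m h X e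
    using assms X \<open>e \<notin> h\<close> by unfold_locales
  show ?thesis
    using unimodular_iff_lam no_geodesic_basis orthonormal_geodesic_basis by blast
qed

end
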